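(* Let $\mathcal{C}$ be a cyclic code of length $n$ over $\mathbb{F}_q$ with $\gcd(n,q)=1$, with zero set $\mathcal{S}(\mathcal{C})$ taken with respect to a primitive $n$-th root of unity $\alpha$. Let $n_1$ be a positive integer with $n_1\mid n$ and let $\mathcal{X}\subseteq\{0,1,\ldots,n_1-1\}$. Let $\delta$ be a guaranteed lower bound on the minimum distance of the length-$n_1$ cyclic code over $\mathbb{F}_q$ whose zeros (with respect to $\beta=\alpha^{n/n_1}$) are the elements of $\mathcal{X}$ together with their $q$-cyclotomic cosets modulo $n_1$. If $$\bigcup_{j\in\mathcal{X}}\{j,\,j+n_1,\,j+2n_1,\ldots,j+n-n_1\}\subseteq\mathcal{S}(\mathcal{C}),$$ then $\mathcal{C}$ has $(r,\delta)$-all-symbol locality with $r=n_1-\delta+1$.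
   Context: Zeros: for a cyclic code $\mathcal{C}$ of length $n$, identifying $\underline{c}$ with $c(x)=\sum c_ix^i$, $\mathcal{S}(\mathcal{C})=\{j\in\{0,\ldots,n-1\}: c(\alpha^j)=0\ \forall \underline{c}\in\mathcal{C}\}$; for a length-$n_1$ cyclic code, zeros are exponents of $\beta=\alpha^{n/n_1}$ defined analogously. The $q$-cyclotomic coset of $i$ modulo $n_1$ is $\{q^j i \bmod n_1 : j\ge 0\}$. $(r,\delta)$-all-symbol locality: for every coordinate $i\in\{0,\ldots,n-1\}$ there is a set $\mathcal{I}_i\subseteq\{0,\ldots,n-1\}$ with $i\in\mathcal{I}_i$ and $|\mathcal{I}_i|\le r+\delta-1$ such that the code $\mathcal{C}$ punctured to the coordinates in $\mathcal{I}_i$ has minimum distance at least $\delta$. *)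

theory Defs
  imports Main "HOL-Library.Cardinality"
begin

definition is_word :: "nat \<Rightarrow> (nat \<Rightarrow> 'a::zero) \<Rightarrow> bool" where
  "is_word n c \<longleftrightarrow> (\<forall>i\<ge>n. c i = 0)"

text \<open>cyclic shift of a length-n word: (c_0,...,c_{n-1}) |-> (c_{n-1},c_0,...,c_{n-2})\<close>
definition cyc_shift :: "nat \<Rightarrow> (nat \<Rightarrow> 'a::zero) \<Rightarrow> nat \<Rightarrow> 'a" where
  "cyc_shift n c = (\<lambda>i. if i < n then c ((i + n - 1) mod n) else 0)"

definition cyclic_code :: "nat \<Rightarrow> (nat \<Rightarrow> 'a::field) set \<Rightarrow> bool" where
  "cyclic_code n C \<longleftrightarrow>
     (\<forall>c\<in>C. is_word n c) \<and> (\<lambda>_. 0) \<in> C \<and>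
     (\<forall>c\<in>C. \<forall>d\<in>C. (\<lambda>i. c i + d i) \<in> C) \<and>
     (\<forall>a. \<forall>c\<in>C. (\<lambda>i. a * c i) \<in> C) \<and>
     (\<forall>c\<in>C. cyc_shift n c \<in> C)"

text \<open>emb embeds the base field F_q into an extension field containing the roots of unity\<close>
definition field_embedding :: "('a::field \<Rightarrow> 'b::field) \<Rightarrow> bool" where
  "field_embedding emb \<longleftrightarrow> emb 1 = 1 \<and>
     (\<forall>x y. emb (x + y) = emb x + emb y) \<and> (\<forall>x y. emb (x * y) = emb x * emb y)"

definition primitive_root :: "nat \<Rightarrow> 'b::field \<Rightarrow> bool" where
  "primitive_root n \<alpha> \<longleftrightarrow> \<alpha> ^ n = 1 \<and> (\<forall>k. 0 < k \<and> k < n \<longrightarrow> \<alpha> ^ k \<noteq> 1)"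

definition word_eval :: "('a \<Rightarrow> 'b::comm_ring_1) \<Rightarrow> nat \<Rightarrow> (nat \<Rightarrow> 'a) \<Rightarrow> 'b \<Rightarrow> 'b" where
  "word_eval emb n c x = (\<Sum>i<n. emb (c i) * x ^ i)"

definition zero_set :: "('a \<Rightarrow> 'b::comm_ring_1) \<Rightarrow> nat \<Rightarrow> 'b \<Rightarrow> (nat \<Rightarrow> 'a) set \<Rightarrow> nat set" where
  "zero_set emb n \<alpha> C = {j. j < n \<and> (\<forall>c\<in>C. word_eval emb n c (\<alpha> ^ j) = 0)}"

definition cyclotomic_coset :: "nat \<Rightarrow> nat \<Rightarrow> nat \<Rightarrow> nat set" where
  "cyclotomic_coset q n1 i = {(q ^ j * i) mod n1 | j. True}"

definition code_with_zeros :: "('a::zero \<Rightarrow> 'b::comm_ring_1) \<Rightarrow> nat \<Rightarrow> 'b \<Rightarrow> nat set \<Rightarrow> (nat \<Rightarrow> 'a) set" where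
  "code_with_zeros emb n1 \<beta> Z = {c. is_word n1 c \<and> (\<forall>j\<in>Z. word_eval emb n1 c (\<beta> ^ j) = 0)}"

definition weight_on :: "nat set \<Rightarrow> (nat \<Rightarrow> 'a::zero) \<Rightarrow> nat" where
  "weight_on I c = card {i\<in>I. c i \<noteq> 0}"

definition min_dist_ge :: "nat \<Rightarrow> (nat \<Rightarrow> 'a::zero) set \<Rightarrow> nat \<Rightarrow> bool" where
  "min_dist_ge n C d \<longleftrightarrow> (\<forall>c\<in>C. (\<exists>i<n. c i \<noteq> 0) \<longrightarrow> d \<le> weight_on {..<n} c)"

text \<open>the code punctured to the coordinates in I has minimum distance at least d
  (punctured code = restrictions of codewords to I; linear, so distance = min nonzero weight)\<close>
definition punctured_min_dist_ge :: "(nat \<Rightarrow> 'a::zero) set \<Rightarrow> nat set \<Rightarrow> nat \<Rightarrow> bool" where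
  "punctured_min_dist_ge C I d \<longleftrightarrow> (\<forall>c\<in>C. (\<exists>i\<in>I. c i \<noteq> 0) \<longrightarrow> d \<le> weight_on I c)"

definition all_symbol_locality :: "nat \<Rightarrow> (nat \<Rightarrow> 'a::zero) set \<Rightarrow> nat \<Rightarrow> nat \<Rightarrow> bool" where
  "all_symbol_locality n C r \<delta> \<longleftrightarrow>
     (\<forall>i<n. \<exists>I. I \<subseteq> {..<n} \<and> i \<in> I \<and> card I \<le> r + \<delta> - 1 \<and> punctured_min_dist_ge C I \<delta>)"

end

theory Submission
  imports Defs "HOL-Algebra.Sylow" "HOL-Algebra.Multiplicative_Group"
begin

text \<open>
  Write \<open>n = m n1\<close>, \<open>\<beta> = \<alpha>^m\<close>, \<open>\<gamma> = \<alpha>^n1\<close>, and let \<open>c\<^sub>k\<close> be the length-\<open>n1\<close> subword of a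
  codeword \<open>c\<close> on the coordinates \<open>\<equiv> k (mod m)\<close>. The polyphase decomposition gives
  \<open>c(\<alpha>^(j + l n1)) = \<Sum>\<^sub>k<m \<gamma>^(k l) \<alpha>^(j k) c\<^sub>k(\<beta>^j)\<close>, a discrete Fourier transform of length \<open>m\<close>
  with respect to the primitive \<open>m\<close>-th root \<open>\<gamma>\<close>. If it vanishes for all \<open>l < m\<close> it can be
  inverted, since \<open>m\<close> is a unit in characteristic \<open>p\<close> when \<open>gcd(n, q) = 1\<close>; hence \<open>c\<^sub>k(\<beta>^j) = 0\<close>.
  As \<open>c\<^sub>k\<close> has coefficients in \<open>F\<^sub>q\<close>, the Frobenius \<open>x \<mapsto> x^q\<close> carries this zero through the whole
  \<open>q\<close>-cyclotomic coset of \<open>j\<close>. So each \<open>c\<^sub>k\<close> lies in the length-\<open>n1\<close> code of distance \<open>\<ge> \<delta>\<close>, and the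
  residue class of a coordinate modulo \<open>m\<close> is a repair group of size \<open>n1 = r + \<delta> - 1\<close>.
\<close>

definition additive_group :: "'a::ab_group_add monoid" where
  "additive_group = \<lparr>carrier = UNIV, monoid.mult = (+), one = 0\<rparr>"

definition units_group :: "'a::field monoid" where
  "units_group = \<lparr>carrier = UNIV - {0}, monoid.mult = (*), one = 1\<rparr>"

lemma group_additive_group: "group additive_group"
  unfolding additive_group_def
  by (rule groupI) (auto simp: add.assoc intro: exI[of _ "- x" for x])

lemma group_units_group: "group units_group"
  unfolding units_group_def
  by (rule groupI) (auto simp: mult.assoc Bex_def intro!: exI[of _ "inverse x" for x])

lemma additive_group_pow:
  "x [^]\<^bsub>additive_group\<lparr>carrier := H\<rparr>\<^esub> (k::nat) = of_nat k * (x::'a::ring_1)"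
  by (induction k) (simp_all add: additive_group_def algebra_simps)

lemma units_group_pow: "x [^]\<^bsub>units_group\<^esub> (k::nat) = (x::'a::field) ^ k"
  by (induction k) (simp_all add: units_group_def)

lemma finite_field_power_card:
  fixes x :: "'a::{finite,field}"
  shows "x ^ CARD('a) = x"
proof (cases "x = 0")
  case False
  have "x ^ (CARD('a) - 1) = 1"
    using group.pow_order_eq_1[OF group_units_group, of x] False
    by (simp add: units_group_pow order_def) (simp add: units_group_def card_Diff_singleton)
  then show ?thesis
    by (metis One_nat_def Suc_pred mult.right_neutral power_Suc zero_less_card_finite)
qed simp

lemma finite_field_power_card_power:
  fixes x :: "'a::{finite,field}"
  shows "x ^ (CARD('a) ^ s) = x"
  by (induction s) (simp_all add: finite_field_power_card power_mult)

lemma prime_CHAR_finite_field: "prime CHAR('a::{finite,field})"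
  by (rule prime_CHAR_semidom) (simp add: finite_imp_CHAR_pos)

text \<open>Cauchy's theorem for the additive group, via a Sylow subgroup: a nonzero element is killed by
  a power of \<open>r\<close>, so \<open>r\<close> vanishes in the field.\<close>
lemma prime_dvd_CARD_imp_eq_CHAR:
  assumes r: "prime r" and r_dvd: "r dvd CARD('a::{finite,field})"
  shows "r = CHAR('a)"
proof -
  define a where "a = multiplicity r CARD('a)"
  obtain m where "CARD('a) = r ^ a * m"
    unfolding a_def using multiplicity_dvd by (metis dvd_def)
  then have "order (additive_group :: 'a monoid) = r ^ a * m"
    by (simp add: order_def additive_group_def)
  then obtain H where H: "subgroup H (additive_group :: 'a monoid)" "card H = r ^ a"
    using sylow_thm[OF r group_additive_group[where 'a='a]] by (auto simp: additive_group_def)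
  have "a > 0"
    using r r_dvd unfolding a_def by (simp add: prime_multiplicity_gt_zero_iff)
  then have "card H > 1"
    using H(2) prime_gt_1_nat[OF r] one_less_power by metis
  then have "\<not> H \<subseteq> {0}"
    using card_mono[of "{0}" H] by auto
  then obtain x :: 'a where x: "x \<in> H" "x \<noteq> 0"
    by blast
  interpret H: group "additive_group\<lparr>carrier := H\<rparr>"
    by (rule subgroup.subgroup_is_group[OF H(1) group_additive_group])
  have "x [^]\<^bsub>additive_group\<lparr>carrier := H\<rparr>\<^esub> card H = 0"
    using H.pow_order_eq_1[of x] x(1) by (simp add: order_def additive_group_def)
  then have "of_nat (r ^ a) * x = 0"
    by (simp only: additive_group_pow H(2))
  then have "of_nat r = (0::'a)"
    using x(2) by simp
  then have "CHAR('a) dvd r"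
    by (simp add: of_nat_eq_0_iff_char_dvd)
  then show ?thesis
    using primes_dvd_imp_eq[OF prime_CHAR_finite_field[where 'a='a] r] by simp
qed

lemma CARD_eq_CHAR_power:
  obtains e where "CARD('a::{finite,field}) = CHAR('a) ^ e"
proof -
  obtain y where y: "CARD('a) = CHAR('a) ^ multiplicity CHAR('a) CARD('a) * y" "\<not> CHAR('a) dvd y"
    using multiplicity_decompose'[of "CARD('a)" "CHAR('a)"] prime_CHAR_finite_field by auto
  have "y = 1"
  proof (rule ccontr)
    assume "y \<noteq> 1"
    then obtain r where r: "prime r" "r dvd y"
      using prime_factor_nat by blast
    then have "r dvd CARD('a)"
      using y(1) by (metis dvd_mult)
    then show False
      using prime_dvd_CARD_imp_eq_CHAR r y(2) by blast
  qed
  then show thesis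
    using that y(1) by simp
qed

lemma
  fixes emb :: "'a::field \<Rightarrow> 'b::field"
  assumes "field_embedding emb"
  shows field_embedding_0: "emb 0 = 0"
    and field_embedding_power: "emb (x ^ k) = emb x ^ k"
    and field_embedding_of_nat: "emb (of_nat k) = of_nat k"
    and field_embedding_eq_0_iff: "emb x = 0 \<longleftrightarrow> x = 0"
proof -
  have add: "emb (x + y) = emb x + emb y" and mult: "emb (x * y) = emb x * emb y"
    and one: "emb 1 = 1" for x y
    using assms unfolding field_embedding_def by auto
  show zero: "emb 0 = 0"
    using add[of 0 0] by (metis add.right_neutral add_left_cancel)
  show "emb (x ^ k) = emb x ^ k"
    by (induction k) (simp_all add: one mult)
  show "emb (of_nat k) = of_nat k"
    by (induction k) (simp_all add: one add zero)
  show "emb x = 0 \<longleftrightarrow> x = 0"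
  proof
    assume "emb x = 0"
    then have "emb (x * inverse x) = 0"
      by (simp add: mult)
    then show "x = 0"
      using one by (metis right_inverse zero_neq_one)
  qed (simp add: zero)
qed

lemma CHAR_field_embedding:
  fixes emb :: "'a::field \<Rightarrow> 'b::field"
  assumes "field_embedding emb"
  shows "CHAR('b) = CHAR('a)"
proof (rule CHAR_eqI)
  show "of_nat CHAR('a) = (0::'b)"
    using field_embedding_of_nat[OF assms, of "CHAR('a)"] field_embedding_0[OF assms] by simp
next
  fix k assume "of_nat k = (0::'b)"
  then have "of_nat k = (0::'a)"
    using field_embedding_of_nat[OF assms] field_embedding_eq_0_iff[OF assms] by metis
  then show "CHAR('a) dvd k"
    by (simp add: of_nat_eq_0_iff_char_dvd)
qed

lemma of_nat_neq_0_if_coprime_CARD: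
  fixes emb :: "'a::{finite,field} \<Rightarrow> 'b::field"
  assumes "field_embedding emb" and "coprime m CARD('a)"
  shows "of_nat m \<noteq> (0::'b)"
proof
  assume "of_nat m = (0::'b)"
  then have "CHAR('a) dvd m"
    by (simp add: of_nat_eq_0_iff_char_dvd CHAR_field_embedding[OF assms(1), symmetric])
  obtain e where e: "CARD('a) = CHAR('a) ^ e"
    using CARD_eq_CHAR_power by blast
  moreover have "CARD('a) \<ge> 2"
    using card_mono[of UNIV "{0, 1 :: 'a}"] by simp
  ultimately have "CHAR('a) dvd CARD('a)"
    by (cases e) auto
  with \<open>CHAR('a) dvd m\<close> show False
    using assms(2) prime_CHAR_finite_field[where 'a='a]
    by (meson coprime_common_divisor not_prime_unit)
qed

lemma word_eval_power_CARD_power: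
  fixes emb :: "'a::{finite,field} \<Rightarrow> 'b::field"
  assumes "field_embedding emb"
  shows "word_eval emb N d y ^ (CARD('a) ^ s) = word_eval emb N d (y ^ (CARD('a) ^ s))"
proof -
  obtain e where "CARD('a) = CHAR('a) ^ e"
    using CARD_eq_CHAR_power by blast
  then have q: "CARD('a) ^ s = CHAR('b) ^ (e * s)"
    by (simp add: CHAR_field_embedding[OF assms] power_mult)
  have coeff: "emb (d t) ^ (CARD('a) ^ s) = emb (d t)" for t
    by (simp add: finite_field_power_card_power flip: field_embedding_power[OF assms])
  have "word_eval emb N d y ^ (CARD('a) ^ s) = (\<Sum>t<N. (emb (d t) * y ^ t) ^ (CARD('a) ^ s))"
    unfolding word_eval_def
    by (rule freshmans_dream_sum'[OF _ q]) (simp add: CHAR_field_embedding[OF assms] prime_CHAR_finite_field)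
  also have "\<dots> = word_eval emb N d (y ^ (CARD('a) ^ s))"
    unfolding word_eval_def by (simp add: power_mult_distrib coeff flip: power_mult) (simp add: mult.commute)
  finally show ?thesis .
qed

lemma power_mod_period:
  fixes b :: "'a::monoid_mult"
  assumes "b ^ N = 1"
  shows "b ^ (x mod N) = b ^ x"
proof -
  have "b ^ x = (b ^ N) ^ (x div N) * b ^ (x mod N)"
    by (metis div_mult_mod_eq power_add power_mult mult.commute)
  then show ?thesis
    using assms by simp
qed

lemma primitive_root_power_eq_1_iff:
  assumes "primitive_root m w" and "0 < m"
  shows "w ^ e = 1 \<longleftrightarrow> m dvd e"
proof -
  have "w ^ e = w ^ (e mod m)"
    using assms(1) power_mod_period unfolding primitive_root_def by metis
  moreover have "e mod m < m"
    using assms(2) by simp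
  ultimately show ?thesis
    using assms(1) unfolding primitive_root_def by (metis dvd_eq_mod_eq_0 neq0_conv power_0)
qed

lemma primitive_root_power:
  assumes "primitive_root (a * b) w" and "0 < b"
  shows "primitive_root a (w ^ b)"
  using assms unfolding primitive_root_def by (simp flip: power_mult add: mult.commute)

lemma sum_powers_primitive_root:
  fixes w :: "'a::field"
  assumes "primitive_root m w" and "0 < m"
  shows "(\<Sum>l<m. (w ^ e) ^ l) = (if m dvd e then of_nat m else 0)"
proof (cases "m dvd e")
  case True
  then have "w ^ e = 1"
    using primitive_root_power_eq_1_iff[OF assms] by simp
  then show ?thesis
    using True by simp
next
  case False
  have "(w ^ e) ^ m = 1"
    using assms(1) unfolding primitive_root_def by (metis power_mult mult.commute power_one)
  then show ?thesis
    using False primitive_root_power_eq_1_iff[OF assms] by (simp add: sum_gp_strict)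
qed

lemma primitive_root_dft_eq_0:
  fixes w :: "'a::field"
  assumes w: "primitive_root m w" and m: "of_nat m \<noteq> (0::'a)"
    and dft: "\<And>l. l < m \<Longrightarrow> (\<Sum>i<m. (w ^ i) ^ l * v i) = 0"
    and k: "k < m"
  shows "v k = 0"
proof -
  have "0 = (\<Sum>l<m. (w ^ (m - k)) ^ l * (\<Sum>i<m. (w ^ i) ^ l * v i))"
    using dft by simp
  also have "\<dots> = (\<Sum>l<m. \<Sum>i<m. v i * (w ^ (i + (m - k))) ^ l)"
    by (simp add: sum_distrib_left power_add power_mult_distrib mult_ac)
  also have "\<dots> = (\<Sum>i<m. v i * (\<Sum>l<m. (w ^ (i + (m - k))) ^ l))"
    by (subst sum.swap) (simp add: sum_distrib_left)
  also have "\<dots> = (\<Sum>i<m. if i = k then v k * of_nat m else 0)"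
  proof (rule sum.cong[OF refl])
    fix i assume "i \<in> {..<m}"
    then have "i < m" by simp
    then have "m dvd i + (m - k) \<longleftrightarrow> i = k"
      using k by (metis Nat.diff_add_assoc add_diff_inverse_nat gcd_nat.order_iff_strict
          less_or_eq_imp_le mod_nat_eqI order.asym trans_le_add2)
    then show "v i * (\<Sum>l<m. (w ^ (i + (m - k))) ^ l) = (if i = k then v k * of_nat m else 0)"
      using sum_powers_primitive_root[OF w] k by auto
  qed
  also have "\<dots> = v k * of_nat m"
    using k by simp
  finally show ?thesis
    using m by simp
qed

lemma add_mult_less_mult:
  fixes k m t n :: nat
  assumes "k < m" and "t < n"
  shows "k + m * t < m * n"
proof -
  have "k + m * t < m * Suc t"
    using assms(1) by simp
  also have "\<dots> \<le> m * n"
    by (rule mult_le_mono2) (use assms(2) in simp)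
  finally show ?thesis .
qed

lemma sum_lessThan_mult_residues:
  fixes f :: "nat \<Rightarrow> 'a::comm_monoid_add"
  assumes "0 < m"
  shows "(\<Sum>i<m * n. f i) = (\<Sum>k<m. \<Sum>t<n. f (k + m * t))"
proof -
  have "(\<Sum>i<m * n. f i) = (\<Sum>(k, t)\<in>{..<m} \<times> {..<n}. f (k + m * t))"
  proof (rule sum.reindex_bij_witness[of _ "\<lambda>(k, t). k + m * t" "\<lambda>i. (i mod m, i div m)"])
    fix i assume "i \<in> {..<m * n}"
    then show "(i mod m, i div m) \<in> {..<m} \<times> {..<n}"
      using assms by (simp add: less_mult_imp_div_less mult.commute)
  qed (use add_mult_less_mult in auto)
  then show ?thesis
    by (simp add: sum.cartesian_product)
qed

definition coset_subword :: "nat \<Rightarrow> nat \<Rightarrow> nat \<Rightarrow> (nat \<Rightarrow> 'a::zero) \<Rightarrow> nat \<Rightarrow> 'a" where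
  "coset_subword m n1 k c = (\<lambda>t. if t < n1 then c (k + m * t) else 0)"

lemma word_eval_polyphase:
  assumes "0 < m"
  shows "word_eval emb (m * n1) c x = (\<Sum>k<m. x ^ k * word_eval emb n1 (coset_subword m n1 k c) (x ^ m))"
  unfolding word_eval_def coset_subword_def sum_lessThan_mult_residues[OF assms]
  by (simp add: sum_distrib_left power_add mult_ac flip: power_mult)

lemma word_eval_coset_subword_eq_0:
  fixes \<alpha> :: "'b::field"
  assumes \<alpha>: "primitive_root (m * n1) \<alpha>" and "0 < n1" and m: "of_nat m \<noteq> (0::'b)"
    and zeros: "\<And>l. l < m \<Longrightarrow> word_eval emb (m * n1) c (\<alpha> ^ (j + l * n1)) = 0"
    and k: "k < m"
  shows "word_eval emb n1 (coset_subword m n1 k c) ((\<alpha> ^ m) ^ j) = 0"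
proof -
  define D where "D i = word_eval emb n1 (coset_subword m n1 i c) ((\<alpha> ^ m) ^ j)" for i
  have "0 < m"
    using k by simp
  have \<alpha>1: "\<alpha> ^ (m * n1) = 1"
    using \<alpha> unfolding primitive_root_def by simp
  have dft: "(\<Sum>i<m. ((\<alpha> ^ n1) ^ i) ^ l * (\<alpha> ^ (j * i) * D i)) = 0" if "l < m" for l
  proof -
    have "(j + l * n1) * m = m * j + m * n1 * l"
      by (simp add: algebra_simps)
    then have "(\<alpha> ^ (j + l * n1)) ^ m = (\<alpha> ^ m) ^ j * (\<alpha> ^ (m * n1)) ^ l"
      by (metis power_add power_mult)
    then have x_m: "(\<alpha> ^ (j + l * n1)) ^ m = (\<alpha> ^ m) ^ j"
      using \<alpha>1 by simp
    have x_i: "(\<alpha> ^ (j + l * n1)) ^ i = ((\<alpha> ^ n1) ^ i) ^ l * \<alpha> ^ (j * i)" for i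
    proof -
      have "(j + l * n1) * i = n1 * i * l + j * i"
        by (simp add: algebra_simps)
      then show ?thesis
        by (metis power_add power_mult)
    qed
    have "(\<Sum>i<m. ((\<alpha> ^ n1) ^ i) ^ l * (\<alpha> ^ (j * i) * D i)) = word_eval emb (m * n1) c (\<alpha> ^ (j + l * n1))"
      unfolding word_eval_polyphase[OF \<open>0 < m\<close>] x_m unfolding x_i D_def by (simp only: mult.assoc)
    then show ?thesis
      using zeros[OF that] by simp
  qed
  have "\<alpha> ^ (j * k) * D k = 0"
    by (rule primitive_root_dft_eq_0[OF primitive_root_power[OF \<alpha> \<open>0 < n1\<close>] m dft k])
  moreover have "\<alpha> \<noteq> 0"
    using \<alpha>1 \<open>0 < m\<close> \<open>0 < n1\<close> by (metis mult_pos_pos zero_power zero_neq_one)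
  ultimately show ?thesis
    unfolding D_def by simp
qed

lemma word_eval_eq_0_cyclotomic_coset:
  fixes emb :: "'a::{finite,field} \<Rightarrow> 'b::field"
  assumes "field_embedding emb" and "\<beta> ^ N = 1" and "word_eval emb N d (\<beta> ^ j) = 0"
    and "z \<in> cyclotomic_coset CARD('a) N j"
  shows "word_eval emb N d (\<beta> ^ z) = 0"
proof -
  obtain s where "z = (CARD('a) ^ s * j) mod N"
    using assms(4) unfolding cyclotomic_coset_def by blast
  then have "\<beta> ^ z = (\<beta> ^ j) ^ (CARD('a) ^ s)"
    using power_mod_period[OF assms(2)] by (simp add: mult.commute flip: power_mult)
  then have "word_eval emb N d (\<beta> ^ z) = word_eval emb N d (\<beta> ^ j) ^ (CARD('a) ^ s)"
    by (simp add: word_eval_power_CARD_power[OF assms(1)])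
  then show ?thesis
    using assms(3) by simp
qed

lemma weight_on_coset_subword:
  assumes "0 < m"
  shows "weight_on ((\<lambda>t. k + m * t) ` {..<n1}) c = weight_on {..<n1} (coset_subword m n1 k c)"
proof -
  have "{i \<in> (\<lambda>t. k + m * t) ` {..<n1}. c i \<noteq> 0} = (\<lambda>t. k + m * t) ` {t \<in> {..<n1}. coset_subword m n1 k c t \<noteq> 0}"
    unfolding coset_subword_def by auto
  moreover have "inj (\<lambda>t. k + m * t)"
    using assms by (simp add: inj_def)
  ultimately show ?thesis
    unfolding weight_on_def by (simp add: card_image inj_on_subset)
qed

lemma all_symbol_locality_if_coset_subwords:
  assumes "0 < m" and "min_dist_ge n1 D \<delta>"
    and "\<And>c k. c \<in> C \<Longrightarrow> k < m \<Longrightarrow> coset_subword m n1 k c \<in> D"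
  shows "all_symbol_locality (m * n1) C (n1 - \<delta> + 1) \<delta>"
  unfolding all_symbol_locality_def
proof (intro allI impI)
  fix i assume i: "i < m * n1"
  define k where "k = i mod m"
  define I where "I = (\<lambda>t. k + m * t) ` {..<n1}"
  have k: "k < m"
    unfolding k_def using assms(1) by simp
  have "I \<subseteq> {..<m * n1}"
    unfolding I_def using add_mult_less_mult[OF k] by auto
  moreover have "i \<in> I"
    unfolding I_def k_def using i by (auto intro!: image_eqI[of _ _ "i div m"] simp: less_mult_imp_div_less mult.commute)
  moreover have "card I \<le> n1"
    unfolding I_def using card_image_le[of "{..<n1}"] by simp
  then have "card I \<le> n1 - \<delta> + 1 + \<delta> - 1"
    by arith
  moreover have "punctured_min_dist_ge C I \<delta>"
    unfolding punctured_min_dist_ge_def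
  proof (intro ballI impI)
    fix c assume c: "c \<in> C" and "\<exists>i\<in>I. c i \<noteq> 0"
    then have "\<exists>t<n1. coset_subword m n1 k c t \<noteq> 0"
      unfolding I_def coset_subword_def by auto
    then have "\<delta> \<le> weight_on {..<n1} (coset_subword m n1 k c)"
      using assms(2) assms(3)[OF c k] unfolding min_dist_ge_def by blast
    then show "\<delta> \<le> weight_on I c"
      unfolding I_def weight_on_coset_subword[OF assms(1)] .
  qed
  ultimately show "\<exists>I\<subseteq>{..<m * n1}. i \<in> I \<and> card I \<le> n1 - \<delta> + 1 + \<delta> - 1 \<and> punctured_min_dist_ge C I \<delta>"
    by blast
qed

theorem theorem2:
  fixes emb :: "'a::{finite,field} \<Rightarrow> 'b::field"
    and C :: "(nat \<Rightarrow> 'a) set"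
    and n n1 \<delta> :: nat and \<alpha> :: 'b and X :: "nat set"
  assumes "field_embedding emb"
    and "0 < n" and "coprime n CARD('a)"
    and "cyclic_code n C"
    and "primitive_root n \<alpha>"
    and "0 < n1" and "n1 dvd n"
    and "X \<subseteq> {..<n1}"
    and "min_dist_ge n1
           (code_with_zeros emb n1 (\<alpha> ^ (n div n1)) (\<Union>j\<in>X. cyclotomic_coset CARD('a) n1 j)) \<delta>"
    and "(\<Union>j\<in>X. {j + l * n1 | l. l < n div n1}) \<subseteq> zero_set emb n \<alpha> C"
  shows "all_symbol_locality n C (n1 - \<delta> + 1) \<delta>"
proof -
  \<comment> \<open>Neither the cyclicity of \<open>C\<close> nor \<open>X \<subseteq> {..<n1}\<close> is needed.\<close>
  define m where "m = n div n1"
  have n: "n = m * n1"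
    using assms(7) unfolding m_def by simp
  have "0 < m"
    using assms(2) n by (cases m) auto
  have \<alpha>: "primitive_root (m * n1) \<alpha>"
    using assms(5) n by simp
  have \<beta>: "(\<alpha> ^ m) ^ n1 = 1"
    using \<alpha> unfolding primitive_root_def by (simp flip: power_mult)
  have m_unit: "of_nat m \<noteq> (0::'b)"
    using of_nat_neq_0_if_coprime_CARD[OF assms(1)] assms(3) n by simp
  have zeros: "word_eval emb (m * n1) c (\<alpha> ^ (j + l * n1)) = 0" if "c \<in> C" "j \<in> X" "l < m" for c j l
  proof -
    have "j + l * n1 \<in> zero_set emb n \<alpha> C"
      using assms(10) that(2,3) unfolding m_def by blast
    then show ?thesis
      using that(1) n unfolding zero_set_def by simp
  qed
  have subwords: "coset_subword m n1 k c \<in> code_with_zeros emb n1 (\<alpha> ^ m) (\<Union>j\<in>X. cyclotomic_coset CARD('a) n1 j)"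
    if c: "c \<in> C" and k: "k < m" for c k
    unfolding code_with_zeros_def
  proof (intro CollectI conjI ballI)
    show "is_word n1 (coset_subword m n1 k c)"
      by (simp add: is_word_def coset_subword_def)
    fix z assume "z \<in> (\<Union>j\<in>X. cyclotomic_coset CARD('a) n1 j)"
    then obtain j where j: "j \<in> X" and z: "z \<in> cyclotomic_coset CARD('a) n1 j"
      by blast
    show "word_eval emb n1 (coset_subword m n1 k c) ((\<alpha> ^ m) ^ z) = 0"
      by (rule word_eval_eq_0_cyclotomic_coset[OF assms(1) \<beta> _ z])
        (rule word_eval_coset_subword_eq_0[OF \<alpha> assms(6) m_unit zeros[OF c j] k])
  qed
  from all_symbol_locality_if_coset_subwords[OF \<open>0 < m\<close> assms(9)[folded m_def] subwords]
  show ?thesis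
    unfolding n .
qed

end
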